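(* Let $P$ be a positive, completely labelled causal logic program and $\pi(p)$ a proof of atom $p$ with respect to $P$. Then $\mathrm{graph}(\pi(p))\in T_P\!\uparrow\!h(p)$, where $h=\mathrm{height}(\pi(p))$.
   Context: Causal graphs: reflexively–transitively closed directed graphs on labels; $G\le G'$ iff $G\supseteq G'$; $G*G'=(G\cup G')^*$, $G\cdot G'$ the closure of the graph with vertices $V\cup V'$ and edges $E\cup E'\cup(V\times V')$. Causal values: down-sets of causal graphs; $*$ intersection, $+$ union, $U\cdot U'={\downarrow}\{G\cdot G'\}$; label $l$ denotes ${\downarrow}$ of the graph with only edge $(l,l)$. Positive completely labelled program: rules $l:H\leftarrow B_1,\dots,B_n$ with atoms $B_i$, every rule labelled, labels pairwise distinct. $T_P(I)(p)=\sum\{(I(B_1)*\dots*I(B_n))\cdot t\mid(t:p\leftarrow B_1,\dots,B_n)\in P\}$; $T_P\!\uparrow\!0=$ all atoms $0$, $T_P\!\uparrow\!(k+1)=T_P(T_P\!\uparrow\!k)$. A proof of $p$ is a derivation tree $\frac{\pi(B_1)\cdots\pi(B_n)}{p}(R)$ with $R\in P$ of head $p$ and body $\{B_1,\dots,B_n\}$ (antecedent $\top$ if $n=0$). $\mathrm{graph}(\pi)$ is the reflexive–transitive closure of the graph whose vertices are the labels of all rules used in $\pi$ and which has, for each sub-derivation using a rule labelled $m$ with immediate subproofs whose last rules are labelled $l_i$, the edges $(l_i,m)$. $\mathrm{height}(\pi)=1+\max\{\mathrm{height}(\pi')\mid\pi'\text{ an immediate subproof of }\pi\}$, with height $1$ when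 the antecedent is $\top$. *)

theory Defs
  imports Main
begin

text \<open>A causal graph is represented by its edge relation; vertices are the
field of the relation (every vertex carries its reflexive loop).  It must be
reflexively-transitively closed on its vertices.\<close>

definition causal_graph :: "('l \<times> 'l) set \<Rightarrow> bool" where
  "causal_graph G \<longleftrightarrow> trans G \<and> Id_on (Field G) \<subseteq> G"

definition gclose :: "'l set \<Rightarrow> ('l \<times> 'l) set \<Rightarrow> ('l \<times> 'l) set" where
  "gclose V E = E\<^sup>+ \<union> Id_on V"

definition cg_le :: "('l \<times> 'l) set \<Rightarrow> ('l \<times> 'l) set \<Rightarrow> bool" where
  "cg_le G G' \<longleftrightarrow> G' \<subseteq> G"

definition cg_prod :: "('l \<times> 'l) set \<Rightarrow> ('l \<times> 'l) set \<Rightarrow> ('l \<times> 'l) set" where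
  "cg_prod G G' = gclose (Field G \<union> Field G') (G \<union> G' \<union> (Field G \<times> Field G'))"

definition down :: "('l \<times> 'l) set set \<Rightarrow> ('l \<times> 'l) set set" where
  "down D = {G'. causal_graph G' \<and> (\<exists>G\<in>D. cg_le G' G)}"

definition val_one :: "('l \<times> 'l) set set" where
  "val_one = {G. causal_graph G}"

definition val_zero :: "('l \<times> 'l) set set" where
  "val_zero = {}"

definition val_prod :: "('l \<times> 'l) set set \<Rightarrow> ('l \<times> 'l) set set \<Rightarrow> ('l \<times> 'l) set set" where
  "val_prod U U' = down {cg_prod G G' | G G'. G \<in> U \<and> G' \<in> U'}"

definition lab_val :: "'l \<Rightarrow> ('l \<times> 'l) set set" where
  "lab_val l = down {{(l, l)}}"

datatype ('a, 'l) rule = Rule (rlabel: 'l) (rhead: 'a) (rbody: "'a list")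

definition completely_labelled :: "('a, 'l) rule set \<Rightarrow> bool" where
  "completely_labelled P \<longleftrightarrow> (\<forall>r1\<in>P. \<forall>r2\<in>P. rlabel r1 = rlabel r2 \<longrightarrow> r1 = r2)"

text \<open>Product (intersection) of the values of the body atoms; empty product is 1.\<close>
definition body_val :: "('a \<Rightarrow> ('l \<times> 'l) set set) \<Rightarrow> 'a list \<Rightarrow> ('l \<times> 'l) set set" where
  "body_val I bs = val_one \<inter> (\<Inter>b\<in>set bs. I b)"

definition TP :: "('a, 'l) rule set \<Rightarrow> ('a \<Rightarrow> ('l \<times> 'l) set set) \<Rightarrow> 'a \<Rightarrow> ('l \<times> 'l) set set" where
  "TP P I p = (\<Union>{val_prod (body_val I (rbody r)) (lab_val (rlabel r)) | r. r \<in> P \<and> rhead r = p})"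

definition TP_iter :: "('a, 'l) rule set \<Rightarrow> nat \<Rightarrow> 'a \<Rightarrow> ('l \<times> 'l) set set" where
  "TP_iter P k = (TP P ^^ k) (\<lambda>_. val_zero)"

datatype ('a, 'l) ptree = Node "('a, 'l) rule" "('a, 'l) ptree list"

fun root_rule :: "('a, 'l) ptree \<Rightarrow> ('a, 'l) rule" where
  "root_rule (Node R _) = R"

fun is_proof :: "('a, 'l) rule set \<Rightarrow> 'a \<Rightarrow> ('a, 'l) ptree \<Rightarrow> bool" where
  "is_proof P p (Node R subs) \<longleftrightarrow>
     R \<in> P \<and> rhead R = p \<and> list_all2 (\<lambda>b s. is_proof P b s) (rbody R) subs"

fun prf_labels :: "('a, 'l) ptree \<Rightarrow> 'l set" where
  "prf_labels (Node R subs) = insert (rlabel R) (\<Union>s\<in>set subs. prf_labels s)"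

fun prf_edges :: "('a, 'l) ptree \<Rightarrow> ('l \<times> 'l) set" where
  "prf_edges (Node R subs) =
     {(rlabel (root_rule s), rlabel R) | s. s \<in> set subs} \<union> (\<Union>s\<in>set subs. prf_edges s)"

definition prf_graph :: "('a, 'l) ptree \<Rightarrow> ('l \<times> 'l) set" where
  "prf_graph \<pi> = gclose (prf_labels \<pi>) (prf_edges \<pi>)"

fun height :: "('a, 'l) ptree \<Rightarrow> nat" where
  "height (Node R subs) = Suc (fold max (map height subs) 0)"

end

theory Submission
  imports Defs
begin

text \<open>Induction on the proof tree, proving the stronger claim that the graph of a proof of
height at most k already lies in the k-th iterate.  For a proof whose last rule R is labelled l,
let G be the closure of the union of the graphs of its immediate subproofs.  By induction each
subgraph lies in the (k-1)-th iterate at its body atom; since values are down-sets and G is a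
larger graph, so does G.  Hence G \<cdot> l is in T_P applied to the (k-1)-th iterate, and the proof
graph contains G \<cdot> l, because every label of a subproof reaches l along the proof's edges.\<close>

lemma gclose_Field: "Field E \<subseteq> V \<Longrightarrow> Field (gclose V E) = V"
  unfolding gclose_def Field_def
  by (auto simp: Id_on_def)
    (metis Domain.intros trancl_domain subsetD, metis Range.intros trancl_range subsetD)

lemma trans_gclose: "trans (gclose V E)"
  unfolding gclose_def trans_def by (auto intro: trancl_trans)

lemma causal_graph_gclose: "Field E \<subseteq> V \<Longrightarrow> causal_graph (gclose V E)"
  unfolding causal_graph_def using trans_gclose gclose_Field
  by (metis Un_upper2 gclose_def)

lemma gclose_mono: "V \<subseteq> W \<Longrightarrow> E \<subseteq> F \<Longrightarrow> gclose V E \<subseteq> gclose W F"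
  unfolding gclose_def using trancl_mono by blast

lemma gclose_least:
  assumes "E \<subseteq> H" and "trans H" and "Id_on V \<subseteq> H"
  shows "gclose V E \<subseteq> H"
proof -
  have "E\<^sup>+ \<subseteq> H\<^sup>+" using assms(1) trancl_mono by blast
  then have "E\<^sup>+ \<subseteq> H" using trancl_id[OF \<open>trans H\<close>] by simp
  with assms(3) show ?thesis unfolding gclose_def by blast
qed

lemma root_label_in_prf_labels: "rlabel (root_rule \<pi>) \<in> prf_labels \<pi>"
  by (cases \<pi>) auto

lemma Field_prf_edges: "Field (prf_edges \<pi>) \<subseteq> prf_labels \<pi>"
proof (induction \<pi>)
  case (Node R subs)
  then show ?case
    using root_label_in_prf_labels unfolding Field_def by fastforce
qed

lemma prf_labels_reach_root:
  "v \<in> prf_labels \<pi> \<Longrightarrow> (v, rlabel (root_rule \<pi>)) \<in> (prf_edges \<pi>)\<^sup>*"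
proof (induction \<pi> arbitrary: v)
  case (Node R subs)
  show ?case
  proof (cases "v = rlabel R")
    case False
    then obtain s where s: "s \<in> set subs" "v \<in> prf_labels s" using Node.prems by auto
    have "(v, rlabel (root_rule s)) \<in> (prf_edges (Node R subs))\<^sup>*"
      using Node.IH[OF s] rtrancl_mono[of "prf_edges s" "prf_edges (Node R subs)"] s(1) by auto
    moreover have "(rlabel (root_rule s), rlabel R) \<in> prf_edges (Node R subs)" using s(1) by auto
    ultimately show ?thesis by (simp add: rtrancl_into_rtrancl)
  qed simp
qed

lemma causal_graph_prf_graph: "causal_graph (prf_graph \<pi>)"
  unfolding prf_graph_def by (rule causal_graph_gclose[OF Field_prf_edges])

definition forest_graph :: "('a, 'l) ptree list \<Rightarrow> ('l \<times> 'l) set" where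
  "forest_graph subs = gclose (\<Union>s\<in>set subs. prf_labels s) (\<Union>s\<in>set subs. prf_edges s)"

lemma Field_UN_prf_edges:
  "Field (\<Union>s\<in>S. prf_edges s) \<subseteq> (\<Union>s\<in>S. prf_labels s)"
  using Field_prf_edges by (fastforce simp: Field_def)

lemma Field_forest_graph: "Field (forest_graph subs) = (\<Union>s\<in>set subs. prf_labels s)"
  unfolding forest_graph_def by (rule gclose_Field[OF Field_UN_prf_edges])

lemma causal_graph_forest_graph: "causal_graph (forest_graph subs)"
  unfolding forest_graph_def by (rule causal_graph_gclose[OF Field_UN_prf_edges])

lemma prf_graph_subset_forest_graph: "s \<in> set subs \<Longrightarrow> prf_graph s \<subseteq> forest_graph subs"
  unfolding prf_graph_def forest_graph_def by (rule gclose_mono) auto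

lemma cg_prod_forest_graph_subset:
  "cg_prod (forest_graph subs) {(rlabel R, rlabel R)} \<subseteq> prf_graph (Node R subs)"
proof -
  let ?l = "rlabel R" and ?H = "prf_graph (Node R subs)"
  have "forest_graph subs \<subseteq> ?H"
    unfolding forest_graph_def prf_graph_def by (rule gclose_mono) auto
  moreover have "(v, ?l) \<in> ?H" if v: "v \<in> Field (forest_graph subs)" for v
  proof -
    obtain s where s: "s \<in> set subs" "v \<in> prf_labels s"
      using v by (auto simp: Field_forest_graph)
    have "(v, rlabel (root_rule s)) \<in> (prf_edges (Node R subs))\<^sup>*"
      using prf_labels_reach_root[OF s(2)] rtrancl_mono[of "prf_edges s" "prf_edges (Node R subs)"]
        s(1) by auto
    moreover have "(rlabel (root_rule s), ?l) \<in> prf_edges (Node R subs)" using s(1) by auto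
    ultimately have "(v, ?l) \<in> (prf_edges (Node R subs))\<^sup>+" by (rule rtrancl_into_trancl1)
    then show ?thesis unfolding prf_graph_def gclose_def by auto
  qed
  moreover have "(?l, ?l) \<in> ?H" unfolding prf_graph_def gclose_def by auto
  moreover have "Field (forest_graph subs) \<union> Field {(?l, ?l)} = prf_labels (Node R subs)"
    by (simp add: Field_forest_graph)
  ultimately have "forest_graph subs \<union> {(?l, ?l)}
      \<union> Field (forest_graph subs) \<times> Field {(?l, ?l)} \<subseteq> ?H"
    by (auto simp: Field_def)
  moreover have "Id_on (prf_labels (Node R subs)) \<subseteq> ?H"
    unfolding prf_graph_def gclose_def by blast
  ultimately show ?thesis
    unfolding cg_prod_def \<open>Field (forest_graph subs) \<union> Field {(?l, ?l)} = _\<close>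
    by (intro gclose_least) (simp_all add: prf_graph_def trans_gclose)
qed

text \<open>Values are down-sets for the reversed inclusion order on graphs, so they are closed
under passing to larger edge sets.\<close>

lemma down_memI: "G \<in> D \<Longrightarrow> causal_graph H \<Longrightarrow> G \<subseteq> H \<Longrightarrow> H \<in> down D"
  unfolding down_def cg_le_def by auto

lemma down_superset: "G \<in> down D \<Longrightarrow> causal_graph H \<Longrightarrow> G \<subseteq> H \<Longrightarrow> H \<in> down D"
  unfolding down_def cg_le_def by auto

lemma TP_iter_Suc: "TP_iter P (Suc k) = TP P (TP_iter P k)"
  unfolding TP_iter_def by simp

lemma TP_iter_superset:
  assumes "G \<in> TP_iter P k q" and "causal_graph H" and "G \<subseteq> H"
  shows "H \<in> TP_iter P k q"
proof (cases k)
  case 0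
  with assms(1) show ?thesis by (simp add: TP_iter_def val_zero_def)
next
  case (Suc m)
  with assms show ?thesis
    unfolding Suc TP_iter_Suc TP_def val_prod_def using down_superset by blast
qed

lemma label_graph_in_lab_val: "{(l, l)} \<in> lab_val l"
  unfolding lab_val_def down_def cg_le_def causal_graph_def
  by (auto simp: trans_def Field_def Id_on_def)

lemma TP_memI:
  assumes "R \<in> P" and "G \<in> body_val I (rbody R)"
    and "causal_graph H" and "cg_prod G {(rlabel R, rlabel R)} \<subseteq> H"
  shows "H \<in> TP P I (rhead R)"
proof -
  have "cg_prod G {(rlabel R, rlabel R)}
      \<in> {cg_prod G G' | G G'. G \<in> body_val I (rbody R) \<and> G' \<in> lab_val (rlabel R)}"
    using assms(2) label_graph_in_lab_val[of "rlabel R"] by blast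
  then have "H \<in> val_prod (body_val I (rbody R)) (lab_val (rlabel R))"
    unfolding val_prod_def using assms(3,4) by (rule down_memI)
  with assms(1) show ?thesis unfolding TP_def by blast
qed

lemma fold_max_upper: "(x::'a::linorder) \<in> set xs \<Longrightarrow> x \<le> fold max xs a"
  unfolding Max.set_eq_fold[symmetric] by simp

lemma height_subproof_less: "s \<in> set subs \<Longrightarrow> height s < height (Node R subs)"
  using fold_max_upper[of "height s" "map height subs" 0] by (simp add: le_imp_less_Suc)

lemma prf_graph_in_TP_iter:
  "is_proof P p \<pi> \<Longrightarrow> height \<pi> \<le> k \<Longrightarrow> prf_graph \<pi> \<in> TP_iter P k p"
proof (induction \<pi> arbitrary: p k)
  case (Node R subs)
  then obtain k' where k: "k = Suc k'" by (cases k) auto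
  have R: "R \<in> P" "rhead R = p" and subs: "list_all2 (is_proof P) (rbody R) subs"
    using Node.prems(1) by auto
  have "forest_graph subs \<in> TP_iter P k' b" if b: "b \<in> set (rbody R)" for b
  proof -
    obtain i where i: "i < length (rbody R)" "rbody R ! i = b"
      using b by (auto simp: in_set_conv_nth)
    let ?s = "subs ! i"
    have s: "?s \<in> set subs" "is_proof P b ?s"
      using i subs by (auto simp: list_all2_conv_all_nth)
    have "height ?s \<le> k'" using height_subproof_less[OF s(1)] Node.prems(2) k by simp
    then have "prf_graph ?s \<in> TP_iter P k' b" using Node.IH[OF s] by simp
    then show ?thesis
      using causal_graph_forest_graph prf_graph_subset_forest_graph[OF s(1)]
      by (rule TP_iter_superset)
  qed
  then have "forest_graph subs \<in> body_val (TP_iter P k') (rbody R)"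
    unfolding body_val_def val_one_def using causal_graph_forest_graph by blast
  then show ?case
    unfolding k TP_iter_Suc R(2)[symmetric]
    by (rule TP_memI[OF R(1) _ causal_graph_prf_graph cg_prod_forest_graph_subset])
qed

theorem mainTheorem19:
  fixes P :: "('a, 'l) rule set" and p :: 'a and \<pi> :: "('a, 'l) ptree"
  assumes "completely_labelled P"
    and "is_proof P p \<pi>"
  shows "prf_graph \<pi> \<in> TP_iter P (height \<pi>) p"
  using prf_graph_in_TP_iter[OF assms(2) order_refl] .

end
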